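(* Let $X_0,Y_0$ be $\mathbb Z_+$-valued random variables with $\mathbf P(X_0=k)\ge\mathbf P(Y_0=k)$ for all integers $k\ge1$ and $\mathbf P(Y_0=0)>0$, coupled as in the $XY$-coupling described below, and let $\eta>0$. If $\mathbf E(X_0)<\infty$ and $\mathbf E(X_0-Y_0)\ge\eta\,\mathbf P(Y_0=0)$, then for all real $r\ge0$, all integers $n\ge0$, $k\ge0$ and all integers $\ell\in[0,\frac{r\eta}2]$, $$\mathbf E(X_{n+k+\ell})\ge\frac{m^{k+\ell}\eta}{2}\,\mathbf E\big[N_n^{(0)}\mathbf 1_{\{N_n^{(0)}\ge r\}}\mathbf 1_{\{Y_n=k\}}\big].$$
   Context: Fix an integer $m\ge2$. Reversed $m$-ary tree $\mathbb T$: vertices have generations $|x|\in\{0,1,2,\dots\}$; each vertex $x$ with $|x|\ge1$ has $m$ parents $x^{(1)},\dots,x^{(m)}$ in generation $|x|-1$, and each vertex has a unique child in the next generation. $XY$-coupling: couple $(X_0,Y_0)$ so that $X_0\ge Y_0$ a.s. and $\mathbf P(X_0=Y_0\mid Y_0>0)=1$ (possible under the hypotheses). Let $(X(x),Y(x))$, $|x|=0$, be i.i.d. copies of this pair, and for $|x|\ge1$ set $X(x):=(X(x^{(1)})+\cdots+X(x^{(m)})-1)^+$, $Y(x):=(Y(x^{(1)})+\cdots+Y(x^{(m)})-1)^+$. Then $X(x)\ge Y(x)$ for all $x$, and for $|x|=n$ the variables $X(x)$ (resp. $Y(x)$) have the law of the $n$-th term $X_n$ (resp. $Y_n$) of the recursive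 system $Z_{n+1}\overset{d}=(Z_{n,1}+\cdots+Z_{n,m}-1)^+$ started from $X_0$ (resp. $Y_0$). Open paths: a path leading to $x$ is $(x_0,\dots,x_{|x|}=x)$ with $|x_j|=j$ and $x_{j+1}$ the child of $x_j$; it is open if for every vertex $z$ on it with $|z|\ge1$, $Y(z^{(1)})+\cdots+Y(z^{(m)})\ge1$ (a path with $|x|=0$ is open). $N^{(i)}(x)$ is the number of open paths leading to $x$ with $Y(x_0)=i$. Let $\mathfrak e_n$ be a fixed vertex of generation $n$ (the first in lexicographic order, with $\mathfrak e_{n+1}$ the child of $\mathfrak e_n$), and set $N_n^{(0)}:=N^{(0)}(\mathfrak e_n)$, $Y_n:=Y(\mathfrak e_n)$, and $X_n:=X(\mathfrak e_n)$. *)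

theory Defs
  imports "HOL-Probability.Probability"
begin

text \<open>Model of the reversed m-ary tree: the vertices of generation n are the pairs (n, i),
  i a natural number. The parents of (n+1, i) are (n, m*i + p) for p < m (p = 0 being the
  first parent), and the unique child of (n, i) is (n+1, i div m). The distinguished vertex
  e_n is (n, 0); (n+1, 0) is the child of (n, 0).
  Given generation-0 values Z :: nat => nat, tval m Z n i is the value at vertex (n, i)
  obtained from the recursion Z(x) = (Z(x^1) + ... + Z(x^m) - 1)^+.\<close>

fun tval :: "nat \<Rightarrow> (nat \<Rightarrow> nat) \<Rightarrow> nat \<Rightarrow> nat \<Rightarrow> nat" where
  "tval m Z 0 i = Z i"
| "tval m Z (Suc n) i = (\<Sum>p<m. tval m Z n (m * i + p)) - 1"

text \<open>The path from the generation-0 vertex (0, i0) passes through (j, i0 div m^j).\<close>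

definition path_open :: "nat \<Rightarrow> (nat \<Rightarrow> nat) \<Rightarrow> nat \<Rightarrow> nat \<Rightarrow> bool" where
  "path_open m Y n i0 \<longleftrightarrow>
     (\<forall>j\<in>{1..n}. (\<Sum>p<m. tval m Y (j - 1) (m * (i0 div m ^ j) + p)) \<ge> 1)"

definition Npaths0 :: "nat \<Rightarrow> (nat \<Rightarrow> nat) \<Rightarrow> nat \<Rightarrow> nat \<Rightarrow> nat" where
  "Npaths0 m Y n i =
     card {i0 \<in> {i * m ^ n ..< (i + 1) * m ^ n}. Y i0 = 0 \<and> path_open m Y n i0}"

end

theory Submission
  imports Defs
begin

text \<open>Where \<open>Y\<close> is positive the coupled systems agree, so at every vertex \<open>X \<ge> Y + S\<close>, where
  \<open>S\<close> sums \<open>X(x\<^sub>0)\<close> over the open paths whose starting vertex has \<open>Y(x\<^sub>0) = 0\<close>. Given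
  \<open>Y(x\<^sub>0) = 0\<close>, whether the path from \<open>x\<^sub>0\<close> is open does not depend on the pair at \<open>x\<^sub>0\<close>,
  so by independence each such path contributes at least \<open>\<eta>\<close> in expectation:
  \<open>E[S; A] \<ge> \<eta> E[N; A]\<close> for \<open>A = {N \<ge> r, Y\<^sub>n = k}\<close>, \<open>N\<close> the number of these paths.
  On \<open>A\<close> the budget \<open>\<ell> \<le> \<eta> N / 2\<close> leaves \<open>E[(X\<^sub>n - k - \<ell>)\<^sup>+] \<ge> \<eta>/2 E[N; A]\<close>.
  Finally \<open>X\<^sub>n\<^sub>+\<^sub>j\<close> dominates the sum of \<open>(X - j)\<^sup>+\<close> over the \<open>m\<^sup>j\<close> ancestors in generation
  \<open>n\<close>, all distributed as \<open>X\<^sub>n\<close>.\<close>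

lemma sum_lessThan_mult_nested:
  fixes h :: "nat \<Rightarrow> 'b::comm_monoid_add"
  shows "(\<Sum>c<m * K. h c) = (\<Sum>p<m. \<Sum>b<K. h (p * K + b))"
proof -
  have "(\<Sum>c<m * K. h c) = (\<Sum>p<m. sum h {p * K..<p * K + K})"
    by (rule sum.nat_group[symmetric])
  also have "\<dots> = (\<Sum>p<m. \<Sum>b<K. h (p * K + b))"
  proof (rule sum.cong[OF refl])
    fix p
    show "sum h {p * K..<p * K + K} = (\<Sum>b<K. h (p * K + b))"
      using sum.shift_bounds_nat_ivl[of h 0 "p * K" K] by (simp add: add.commute atLeast0LessThan)
  qed
  finally show ?thesis .
qed

lemma sum_diff_one_le:
  fixes f :: "'a \<Rightarrow> nat"
  shows "(\<Sum>x\<in>A. f x - 1) \<le> (\<Sum>x\<in>A. f x) - 1"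
proof (induction A rule: infinite_finite_induct)
  case (insert x F)
  then show ?case by (cases "f x") auto
qed auto

lemma tval_cong:
  assumes "\<And>t. i * m ^ n \<le> t \<Longrightarrow> t < (i + 1) * m ^ n \<Longrightarrow> Z t = Z' t"
  shows "tval m Z n i = tval m Z' n i"
  using assms
proof (induction n arbitrary: i)
  case (Suc n)
  have "tval m Z n (m * i + p) = tval m Z' n (m * i + p)" if "p < m" for p
  proof (rule Suc.IH)
    fix t assume t: "(m * i + p) * m ^ n \<le> t" "t < (m * i + p + 1) * m ^ n"
    have "(m * i + p + 1) * m ^ n \<le> (m * (i + 1)) * m ^ n"
      using \<open>p < m\<close> by (intro mult_right_mono) auto
    with t show "Z t = Z' t"
      by (intro Suc.prems) (auto simp: algebra_simps elim: order_trans[rotated])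
  qed
  then show ?case by simp
qed simp

lemma tval_cong0:
  assumes "\<And>t. t < m ^ n \<Longrightarrow> Z t = Z' t"
  shows "tval m Z n 0 = tval m Z' n 0"
  using assms by (intro tval_cong) simp

lemma tval_shift: "tval m (\<lambda>t. Z (c * m ^ n + t)) n i = tval m Z n (c + i)"
proof (induction n arbitrary: c i)
  case (Suc n)
  have "tval m (\<lambda>t. Z (c * m ^ Suc n + t)) n (m * i + p) = tval m Z n (m * (c + i) + p)" for p
    using Suc.IH[of "c * m" "m * i + p"] by (simp add: algebra_simps)
  then show ?case by simp
qed simp

text \<open>Each of the \<open>m ^ j\<close> ancestors of a vertex in generation \<open>j\<close> above it loses at most
  one unit per generation on its way down.\<close>

lemma tval_ge_sum_ancestors:
  "(\<Sum>b<m ^ j. tval m Z n (i * m ^ j + b) - j) \<le> tval m Z (n + j) i"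
proof (induction j arbitrary: i)
  case (Suc j)
  let ?d = "\<lambda>p b. tval m Z n ((m * i + p) * m ^ j + b) - j"
  have "(\<Sum>c<m * m ^ j. tval m Z n (i * m ^ Suc j + c) - Suc j) = (\<Sum>p<m. \<Sum>b<m ^ j. ?d p b - 1)"
    by (subst sum_lessThan_mult_nested) (simp add: algebra_simps)
  also have "\<dots> \<le> (\<Sum>p<m. (\<Sum>b<m ^ j. ?d p b) - 1)"
    by (intro sum_mono sum_diff_one_le)
  also have "\<dots> \<le> (\<Sum>p<m. tval m Z (n + j) (m * i + p) - 1)"
    by (intro sum_mono diff_le_mono Suc.IH)
  also have "\<dots> \<le> tval m Z (n + Suc j) i"
    using sum_diff_one_le by simp
  finally show ?case by simp
qed simp

lemma path_open_Suc:
  "path_open m Y (Suc n) i0 \<longleftrightarrow>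
     path_open m Y n i0 \<and> 1 \<le> (\<Sum>p<m. tval m Y n (m * (i0 div m ^ Suc n) + p))"
  unfolding path_open_def by (auto simp: atLeastAtMostSuc_conv)

lemma path_open_cong:
  assumes "0 < m" and "\<And>t. t < m ^ n \<Longrightarrow> Y t = Y' t" and "i0 < m ^ n"
  shows "path_open m Y n i0 \<longleftrightarrow> path_open m Y' n i0"
  unfolding path_open_def
proof (intro ball_cong refl arg_cong2[where f = "(\<le>)"] sum.cong tval_cong)
  fix j p t assume j: "j \<in> {1..n}" and p: "p \<in> {..<m}"
    and t: "t < (m * (i0 div m ^ j) + p + 1) * m ^ (j - 1)"
  let ?q = "i0 div m ^ j"
  have split: "m ^ n = m ^ (n - j) * m ^ j" "m ^ j = m * m ^ (j - 1)"
    using j by (simp_all flip: power_add power_Suc)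
  have "(m * ?q + p + 1) * m ^ (j - 1) \<le> (m * (?q + 1)) * m ^ (j - 1)"
    using p by (intro mult_right_mono) auto
  also have "\<dots> = (?q + 1) * m ^ j"
    using split(2) by (simp add: algebra_simps)
  also have "\<dots> \<le> m ^ n"
  proof -
    have "?q < m ^ (n - j)"
      using assms(1,3) split(1) by (simp add: less_mult_imp_div_less)
    then show ?thesis
      using split(1) by (metis Suc_eq_plus1 Suc_leI mult_le_mono1)
  qed
  finally show "Y t = Y' t"
    using t assms(2) by simp
qed

definition open_zero_mass :: "nat \<Rightarrow> (nat \<Rightarrow> nat) \<Rightarrow> (nat \<Rightarrow> nat) \<Rightarrow> nat \<Rightarrow> nat \<Rightarrow> nat" where
  "open_zero_mass m X Y n i =
     (\<Sum>c<m ^ n. of_bool (Y (i * m ^ n + c) = 0 \<and> path_open m Y n (i * m ^ n + c)) * X (i * m ^ n + c))"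

lemma open_zero_mass_Suc:
  assumes "0 < m"
  shows "open_zero_mass m X Y (Suc n) i =
    of_bool (1 \<le> (\<Sum>p<m. tval m Y n (m * i + p))) * (\<Sum>p<m. open_zero_mass m X Y n (m * i + p))"
proof -
  have "(i * m ^ Suc n + c) div m ^ Suc n = i" if "c < m ^ Suc n" for c
    using that assms by simp
  then have "open_zero_mass m X Y (Suc n) i = of_bool (1 \<le> (\<Sum>p<m. tval m Y n (m * i + p))) *
      (\<Sum>c<m * m ^ n. of_bool (Y (i * m ^ Suc n + c) = 0 \<and> path_open m Y n (i * m ^ Suc n + c))
         * X (i * m ^ Suc n + c))"
    unfolding open_zero_mass_def sum_distrib_left by (intro sum.cong) (auto simp: path_open_Suc)
  also have "(\<Sum>c<m * m ^ n. of_bool (Y (i * m ^ Suc n + c) = 0 \<and> path_open m Y n (i * m ^ Suc n + c))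
         * X (i * m ^ Suc n + c)) = (\<Sum>p<m. open_zero_mass m X Y n (m * i + p))"
  proof -
    have reindex: "i * m ^ Suc n + (p * m ^ n + b) = (m * i + p) * m ^ n + b" for p b
      by (simp add: algebra_simps)
    show ?thesis
      unfolding open_zero_mass_def by (subst sum_lessThan_mult_nested) (simp only: reindex)
  qed
  finally show ?thesis .
qed

lemma tval_ge_tval_plus_open_zero_mass:
  assumes "\<And>t. Y t \<le> X t" and "0 < m"
  shows "tval m Y n i + open_zero_mass m X Y n i \<le> tval m X n i"
proof (induction n arbitrary: i)
  case 0
  then show ?case
    using assms(1)[of i] by (simp add: open_zero_mass_def path_open_def)
next
  case (Suc n)
  let ?s = "\<Sum>p<m. tval m Y n (m * i + p)"
  show ?case
  proof (cases "1 \<le> ?s")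
    case True
    then have "tval m Y (Suc n) i + open_zero_mass m X Y (Suc n) i
        = (\<Sum>p<m. tval m Y n (m * i + p) + open_zero_mass m X Y n (m * i + p)) - 1"
      using assms(2) by (simp add: open_zero_mass_Suc sum.distrib)
    also have "\<dots> \<le> tval m X (Suc n) i"
      by (simp add: diff_le_mono sum_mono Suc.IH)
    finally show ?thesis .
  qed (use assms(2) in \<open>simp add: open_zero_mass_Suc\<close>)
qed

lemma Npaths0_eq_sum:
  "Npaths0 m Y n 0 = (\<Sum>c<m ^ n. of_bool (Y c = 0 \<and> path_open m Y n c))"
  unfolding Npaths0_def by (simp add: sum.inter_filter[symmetric] atLeast0LessThan Int_def)

lemma Npaths0_cong0:
  assumes "0 < m" and "\<And>t. t < m ^ n \<Longrightarrow> Y t = Y' t"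
  shows "Npaths0 m Y n 0 = Npaths0 m Y' n 0"
  unfolding Npaths0_eq_sum using path_open_cong[OF assms] assms(2) by (intro sum.cong) auto

lemma Npaths0_le: "Npaths0 m Y n i \<le> m ^ n"
proof -
  have "Npaths0 m Y n i \<le> card {i * m ^ n..<(i + 1) * m ^ n}"
    unfolding Npaths0_def by (intro card_mono) auto
  then show ?thesis
    by simp
qed

lemma open_zero_mass_eq_sum:
  "open_zero_mass m X Y n 0 = (\<Sum>c<m ^ n. of_bool (Y c = 0 \<and> path_open m Y n c) * X c)"
  unfolding open_zero_mass_def by simp

lemma open_zero_mass_cong0:
  assumes "0 < m" and "\<And>t. t < m ^ n \<Longrightarrow> X t = X' t" and "\<And>t. t < m ^ n \<Longrightarrow> Y t = Y' t"
  shows "open_zero_mass m X Y n 0 = open_zero_mass m X' Y' n 0"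
  unfolding open_zero_mass_eq_sum using path_open_cong[OF assms(1,3)] assms(2,3)
  by (intro sum.cong) auto

text \<open>Evaluating at \<open>y(c := 0)\<close> makes the weight forget \<open>y c\<close>, which is what makes it
  independent of the pair at \<open>c\<close>; on \<open>{y c = 0}\<close> nothing changes.\<close>

definition zero_start_weight ::
    "nat \<Rightarrow> nat \<Rightarrow> ((nat \<Rightarrow> nat) \<Rightarrow> 'a :: comm_semiring_1) \<Rightarrow> nat \<Rightarrow> (nat \<Rightarrow> nat) \<Rightarrow> 'a" where
  "zero_start_weight m n W c y = of_bool (path_open m (y(c := 0)) n c) * W (y(c := 0))"

lemma zero_start_weight_cong:
  assumes "0 < m" and W: "\<And>y y'. (\<And>t. t < m ^ n \<Longrightarrow> y t = y' t) \<Longrightarrow> W y = W y'"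
    and "c < m ^ n" and "\<And>t. t < m ^ n \<Longrightarrow> t \<noteq> c \<Longrightarrow> y t = y' t"
  shows "zero_start_weight m n W c y = zero_start_weight m n W c y'"
proof -
  have "path_open m (y(c := 0)) n c \<longleftrightarrow> path_open m (y'(c := 0)) n c"
    by (rule path_open_cong[OF assms(1) _ assms(3)]) (use assms(4) in simp)
  moreover have "W (y(c := 0)) = W (y'(c := 0))"
    by (rule W) (use assms(4) in simp)
  ultimately show ?thesis
    by (simp add: zero_start_weight_def)
qed

lemma of_bool_mult_eq_zero_start_weight:
  "of_bool (y c = 0 \<and> path_open m y n c) * W y = of_bool (y c = 0) * zero_start_weight m n W c y"
  by (cases "y c = 0") (simp_all add: zero_start_weight_def fun_upd_idem)

lemma Npaths0_mult_eq_sum: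
  "of_nat (Npaths0 m y n 0) * W y = (\<Sum>c<m ^ n. of_bool (y c = 0) * zero_start_weight m n W c y)"
  unfolding Npaths0_eq_sum of_nat_sum sum_distrib_right of_nat_of_bool of_bool_mult_eq_zero_start_weight ..

lemma open_zero_mass_mult_eq_sum:
  "of_nat (open_zero_mass m x y n 0) * W y
     = (\<Sum>c<m ^ n. of_nat (x c) * of_bool (y c = 0) * zero_start_weight m n W c y)"
  unfolding open_zero_mass_eq_sum of_nat_sum sum_distrib_right of_nat_mult of_nat_of_bool
  by (simp only: mult.commute[of "of_bool _" "of_nat _"] mult.assoc of_bool_mult_eq_zero_start_weight)

lemma ennreal_le_of_double_le:
  fixes x y :: ennreal
  assumes "x \<noteq> \<infinity>" and "2 * x \<le> y + x"
  shows "x \<le> y"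
  using assms by (simp add: mult_2 ennreal_add_left_cancel_le add.commute[of y])

lemma ennreal_of_bool_budget:
  assumes "P \<Longrightarrow> real l \<le> c * real N" and "0 \<le> c"
  shows "of_nat l * of_bool P \<le> ennreal c * (of_nat N * of_bool P)"
proof (cases P)
  case True
  then have "ennreal (real l) \<le> ennreal (c * real N)"
    by (intro ennreal_leI assms(1))
  then show ?thesis
    using True \<open>0 \<le> c\<close> by (simp add: ennreal_mult ennreal_of_nat_eq_real_of_nat)
qed simp

lemma (in prob_space) indep_sets_reindex:
  assumes indep: "indep_sets F I" and h: "inj_on h J" "h ` J \<subseteq> I"
  shows "indep_sets (\<lambda>j. F (h j)) J"
proof (rule indep_setsI)
  show "F (h j) \<subseteq> events" if "j \<in> J" for j
    using indep h that by (auto simp: indep_sets_def)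
next
  fix A K assume K: "K \<noteq> {}" "K \<subseteq> J" "finite K" and A: "\<forall>k\<in>K. A k \<in> F (h k)"
  define A' where "A' i = A (the_inv_into K h i)" for i
  have hK: "inj_on h K"
    using h(1) K(2) by (rule inj_on_subset)
  have A'h: "A' (h k) = A k" if "k \<in> K" for k
    using the_inv_into_f_f[OF hK that] by (simp add: A'_def)
  have "prob (\<Inter>i\<in>h ` K. A' i) = (\<Prod>i\<in>h ` K. prob (A' i))"
  proof (rule indep_setsD[OF indep])
    show "h ` K \<subseteq> I" "h ` K \<noteq> {}" "finite (h ` K)"
      using K h(2) by auto
    show "\<forall>i\<in>h ` K. A' i \<in> F i"
      using A A'h by auto
  qed
  then show "prob (\<Inter>k\<in>K. A k) = (\<Prod>k\<in>K. prob (A k))"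
    using A'h by (simp add: prod.reindex[OF hK])
qed

lemma (in prob_space) indep_vars_reindex:
  assumes "indep_vars M' X I" "inj_on h J" "h ` J \<subseteq> I"
  shows "indep_vars (\<lambda>j. M' (h j)) (\<lambda>j. X (h j)) J"
  using assms indep_sets_reindex[of _ I h J] unfolding indep_vars_def by auto

lemma (in prob_space) indep_var_nn_integral_mult:
  fixes u w :: "_ \<Rightarrow> ennreal"
  assumes "indep_var Ma A Mb B" "u \<in> borel_measurable Ma" "w \<in> borel_measurable Mb"
  shows "(\<integral>\<^sup>+\<omega>. u (A \<omega>) * w (B \<omega>) \<partial>M) = (\<integral>\<^sup>+\<omega>. u (A \<omega>) \<partial>M) * (\<integral>\<^sup>+\<omega>. w (B \<omega>) \<partial>M)"
proof -
  have "case_bool borel borel = (\<lambda>_::bool. borel :: ennreal measure)"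
    by (rule ext) (simp split: bool.split)
  moreover have "indep_var borel (u \<circ> A) borel (w \<circ> B)"
    using assms by (rule indep_var_compose)
  ultimately have "indep_vars (\<lambda>_. borel) (case_bool (u \<circ> A) (w \<circ> B)) UNIV"
    unfolding indep_var_def by metis
  then have "(\<integral>\<^sup>+\<omega>. (\<Prod>b\<in>UNIV. case_bool (u \<circ> A) (w \<circ> B) b \<omega>) \<partial>M) =
      (\<Prod>b\<in>UNIV. \<integral>\<^sup>+\<omega>. case_bool (u \<circ> A) (w \<circ> B) b \<omega> \<partial>M)"
    by (intro indep_vars_nn_integral) auto
  then show ?thesis
    by (simp add: UNIV_bool mult.commute comp_def)
qed

lemma count_space_PiM_UNIV:
  "finite I \<Longrightarrow> PiM I (\<lambda>_. count_space (UNIV :: 'b :: countable set)) = count_space (PiE I (\<lambda>_. UNIV))"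
  by (rule count_space_PiM_finite) auto

locale iid_pairs = prob_space M for M :: "'a measure" +
  fixes X Y :: "nat \<Rightarrow> 'a \<Rightarrow> nat"
  assumes measurable_pair: "\<And>i. (\<lambda>\<omega>. (X i \<omega>, Y i \<omega>)) \<in> M \<rightarrow>\<^sub>M count_space UNIV"
    and indep_pairs: "indep_vars (\<lambda>_. count_space UNIV) (\<lambda>i \<omega>. (X i \<omega>, Y i \<omega>)) UNIV"
    and distr_pair: "\<And>i. distr M (count_space UNIV) (\<lambda>\<omega>. (X i \<omega>, Y i \<omega>))
                        = distr M (count_space UNIV) (\<lambda>\<omega>. (X 0 \<omega>, Y 0 \<omega>))"
begin

lemma measurable_X: "X i \<in> M \<rightarrow>\<^sub>M count_space UNIV"
  using measurable_compose[OF measurable_pair, of fst] by simp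

lemma measurable_Y: "Y i \<in> M \<rightarrow>\<^sub>M count_space UNIV"
  using measurable_compose[OF measurable_pair, of snd] by simp

lemma measurable_window:
  assumes "\<And>x y x' y'. (\<And>t. t < K \<Longrightarrow> x t = x' t) \<Longrightarrow> (\<And>t. t < K \<Longrightarrow> y t = y' t) \<Longrightarrow> H x y = H x' y'"
    and "\<And>x y. H x y \<in> space N"
  shows "(\<lambda>\<omega>. H (\<lambda>i. X i \<omega>) (\<lambda>i. Y i \<omega>)) \<in> M \<rightarrow>\<^sub>M N"
proof -
  let ?R = "\<lambda>\<omega>. \<lambda>i\<in>{..<K}. (X i \<omega>, Y i \<omega>)"
  have R: "?R \<in> M \<rightarrow>\<^sub>M PiM {..<K} (\<lambda>_. count_space UNIV)"
    using measurable_pair by (intro measurable_restrict) auto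
  have "(\<lambda>\<omega>. H (\<lambda>i. X i \<omega>) (\<lambda>i. Y i \<omega>)) = (\<lambda>\<omega>. H (\<lambda>i. fst (?R \<omega> i)) (\<lambda>i. snd (?R \<omega> i)))"
    by (intro ext assms(1)) auto
  also have "\<dots> \<in> M \<rightarrow>\<^sub>M N"
    using R by (rule measurable_compose) (simp add: count_space_PiM_UNIV assms(2))
  finally show ?thesis .
qed

lemma nn_integral_pair_shift:
  "(\<integral>\<^sup>+\<omega>. g (X i \<omega>) (Y i \<omega>) \<partial>M) = (\<integral>\<^sup>+\<omega>. g (X 0 \<omega>) (Y 0 \<omega>) \<partial>M)"
proof -
  have eq: "(\<integral>\<^sup>+\<omega>. g (X j \<omega>) (Y j \<omega>) \<partial>M) =
      (\<integral>\<^sup>+p. case_prod g p \<partial>distr M (count_space UNIV) (\<lambda>\<omega>. (X j \<omega>, Y j \<omega>)))" for j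
    by (simp add: nn_integral_distr[OF measurable_pair])
  show ?thesis
    unfolding eq distr_pair[of i] ..
qed

lemma AE_pairs_all:
  assumes "AE \<omega> in M. P (X 0 \<omega>) (Y 0 \<omega>)"
  shows "AE \<omega> in M. \<forall>i. P (X i \<omega>) (Y i \<omega>)"
proof (subst AE_all_countable, rule allI)
  fix i
  have "(AE p in distr M (count_space UNIV) (\<lambda>\<omega>. (X j \<omega>, Y j \<omega>)). case_prod P p)
      \<longleftrightarrow> (AE \<omega> in M. P (X j \<omega>) (Y j \<omega>))" for j
    by (subst AE_distr_iff[OF measurable_pair]) simp_all
  from this[of i] this[of 0] show "AE \<omega> in M. P (X i \<omega>) (Y i \<omega>)"
    using assms unfolding distr_pair[of i] by blast
qed

lemma distr_X: "distr M (count_space UNIV) (X i) = distr M (count_space UNIV) (X 0)"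
proof -
  have "distr M (count_space UNIV) (X j) =
      distr (distr M (count_space UNIV) (\<lambda>\<omega>. (X j \<omega>, Y j \<omega>))) (count_space UNIV) fst" for j
    by (subst distr_distr) (auto simp: measurable_pair comp_def)
  then show ?thesis
    using distr_pair[of i] by simp
qed

lemma nn_integral_block_shift:
  fixes H :: "(nat \<Rightarrow> nat) \<Rightarrow> ennreal"
  assumes H: "\<And>x x'. (\<And>t. t < K \<Longrightarrow> x t = x' t) \<Longrightarrow> H x = H x'"
  shows "(\<integral>\<^sup>+\<omega>. H (\<lambda>t. X (b + t) \<omega>) \<partial>M) = (\<integral>\<^sup>+\<omega>. H (\<lambda>t. X t \<omega>) \<partial>M)"
proof -
  \<comment> \<open>\<open>Suc K\<close>: the product-measure form of independence needs a nonempty index set\<close>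
  let ?I = "{..<Suc K}"
  let ?N = "PiM ?I (\<lambda>_. count_space (UNIV :: nat set))"
  have block_distr: "distr M ?N (\<lambda>\<omega>. \<lambda>t\<in>?I. X (c + t) \<omega>) = PiM ?I (\<lambda>_. distr M (count_space UNIV) (X 0))"
    for c
  proof -
    have "indep_vars (\<lambda>_. count_space UNIV) X UNIV"
      using indep_vars_compose2[OF indep_pairs, of "\<lambda>_. fst" "\<lambda>_. count_space UNIV"] by simp
    then have "indep_vars (\<lambda>_. count_space UNIV) (\<lambda>t. X (c + t)) ?I"
      by (rule indep_vars_reindex) auto
    then have "distr M ?N (\<lambda>\<omega>. \<lambda>t\<in>?I. X (c + t) \<omega>) = PiM ?I (\<lambda>t. distr M (count_space UNIV) (X (c + t)))"
      using measurable_X by (subst (asm) indep_vars_iff_distr_eq_PiM) auto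
    also have "\<dots> = PiM ?I (\<lambda>_. distr M (count_space UNIV) (X 0))"
      using distr_X by (intro PiM_cong) auto
    finally show ?thesis .
  qed
  have eq: "(\<integral>\<^sup>+\<omega>. H (\<lambda>t. X (c + t) \<omega>) \<partial>M) = (\<integral>\<^sup>+f. H f \<partial>distr M ?N (\<lambda>\<omega>. \<lambda>t\<in>?I. X (c + t) \<omega>))"
    for c
  proof -
    have restr: "(\<lambda>\<omega>. \<lambda>t\<in>?I. X (c + t) \<omega>) \<in> M \<rightarrow>\<^sub>M ?N"
      using measurable_X by (intro measurable_restrict) auto
    have "(\<integral>\<^sup>+\<omega>. H (\<lambda>t. X (c + t) \<omega>) \<partial>M) = (\<integral>\<^sup>+\<omega>. H (\<lambda>t\<in>?I. X (c + t) \<omega>) \<partial>M)"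
      by (intro nn_integral_cong H) auto
    also have "\<dots> = (\<integral>\<^sup>+f. H f \<partial>distr M ?N (\<lambda>\<omega>. \<lambda>t\<in>?I. X (c + t) \<omega>))"
      by (rule nn_integral_distr[symmetric, OF restr]) (simp add: count_space_PiM_UNIV)
    finally show ?thesis .
  qed
  show ?thesis
    using eq[of b] eq[of 0] block_distr[of b] block_distr[of 0] by simp
qed

lemma measurable_tval: "(\<lambda>\<omega>. tval m (\<lambda>i. X i \<omega>) n b) \<in> M \<rightarrow>\<^sub>M count_space UNIV"
  by (rule measurable_window[where K = "(b + 1) * m ^ n"], rule tval_cong) auto

lemma nn_integral_tval_shift:
  "(\<integral>\<^sup>+\<omega>. g (tval m (\<lambda>i. X i \<omega>) n b) \<partial>M) = (\<integral>\<^sup>+\<omega>. g (tval m (\<lambda>i. X i \<omega>) n 0) \<partial>M)"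
proof -
  have shift: "tval m Z n b = tval m (\<lambda>t. Z (b * m ^ n + t)) n 0" for Z
    using tval_shift[of m Z b n 0] by simp
  have "(\<integral>\<^sup>+\<omega>. g (tval m (\<lambda>i. X i \<omega>) n b) \<partial>M)
      = (\<integral>\<^sup>+\<omega>. g (tval m (\<lambda>t. X (b * m ^ n + t) \<omega>) n 0) \<partial>M)"
    by (simp only: shift)
  also have "\<dots> = (\<integral>\<^sup>+\<omega>. g (tval m (\<lambda>i. X i \<omega>) n 0) \<partial>M)"
    by (rule nn_integral_block_shift[where K = "m ^ n"]) (metis tval_cong0)
  finally show ?thesis .
qed

lemma nn_integral_tval_ge_ancestors:
  "of_nat (m ^ j) * (\<integral>\<^sup>+\<omega>. of_nat (tval m (\<lambda>i. X i \<omega>) n 0 - j) \<partial>M)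
     \<le> (\<integral>\<^sup>+\<omega>. of_nat (tval m (\<lambda>i. X i \<omega>) (n + j) 0) \<partial>M)"
proof -
  have "of_nat (m ^ j) * (\<integral>\<^sup>+\<omega>. of_nat (tval m (\<lambda>i. X i \<omega>) n 0 - j) \<partial>M)
      = (\<Sum>b<m ^ j. \<integral>\<^sup>+\<omega>. of_nat (tval m (\<lambda>i. X i \<omega>) n 0 - j) \<partial>M)"
    by simp
  also have "\<dots> = (\<Sum>b<m ^ j. \<integral>\<^sup>+\<omega>. of_nat (tval m (\<lambda>i. X i \<omega>) n b - j) \<partial>M)"
    by (intro sum.cong refl nn_integral_tval_shift[symmetric])
  also have "\<dots> = (\<integral>\<^sup>+\<omega>. (\<Sum>b<m ^ j. of_nat (tval m (\<lambda>i. X i \<omega>) n b - j)) \<partial>M)"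
  proof (intro nn_integral_sum[symmetric])
    show "(\<lambda>\<omega>. of_nat (tval m (\<lambda>i. X i \<omega>) n b - j) :: ennreal) \<in> borel_measurable M" for b
      by (rule measurable_compose[OF measurable_tval]) simp
  qed
  also have "\<dots> \<le> (\<integral>\<^sup>+\<omega>. of_nat (tval m (\<lambda>i. X i \<omega>) (n + j) 0) \<partial>M)"
    using tval_ge_sum_ancestors[of m _ n 0 j] by (intro nn_integral_mono) (simp flip: of_nat_sum)
  finally show ?thesis .
qed

lemma nn_integral_mult_indep_coordinate:
  fixes g :: "nat \<Rightarrow> nat \<Rightarrow> ennreal" and H :: "(nat \<Rightarrow> nat) \<Rightarrow> ennreal"
  assumes H: "\<And>y y'. (\<And>t. t < K \<Longrightarrow> t \<noteq> c \<Longrightarrow> y t = y' t) \<Longrightarrow> H y = H y'"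
  shows "(\<integral>\<^sup>+\<omega>. g (X c \<omega>) (Y c \<omega>) * H (\<lambda>i. Y i \<omega>) \<partial>M) =
         (\<integral>\<^sup>+\<omega>. g (X c \<omega>) (Y c \<omega>) \<partial>M) * (\<integral>\<^sup>+\<omega>. H (\<lambda>i. Y i \<omega>) \<partial>M)"
proof -
  let ?Q = "\<lambda>i \<omega>. (X i \<omega>, Y i \<omega>)"
  define B where "B = {..<K} - {c}"
  define u where "u f = g (fst (f c)) (snd (f c))" for f :: "nat \<Rightarrow> nat \<times> nat"
  define w where "w f = H (\<lambda>t. snd (f t))" for f :: "nat \<Rightarrow> nat \<times> nat"
  have "indep_var (PiM {c} (\<lambda>_. count_space UNIV)) (\<lambda>\<omega>. restrict (\<lambda>i. ?Q i \<omega>) {c})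
      (PiM B (\<lambda>_. count_space UNIV)) (\<lambda>\<omega>. restrict (\<lambda>i. ?Q i \<omega>) B)"
    using indep_pairs by (rule indep_var_restrict) (auto simp: B_def)
  moreover have "u \<in> borel_measurable (PiM {c} (\<lambda>_. count_space UNIV))"
    "w \<in> borel_measurable (PiM B (\<lambda>_. count_space UNIV))"
    by (simp_all add: count_space_PiM_UNIV B_def)
  ultimately have "(\<integral>\<^sup>+\<omega>. u (restrict (\<lambda>i. ?Q i \<omega>) {c}) * w (restrict (\<lambda>i. ?Q i \<omega>) B) \<partial>M) =
      (\<integral>\<^sup>+\<omega>. u (restrict (\<lambda>i. ?Q i \<omega>) {c}) \<partial>M) * (\<integral>\<^sup>+\<omega>. w (restrict (\<lambda>i. ?Q i \<omega>) B) \<partial>M)"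
    by (rule indep_var_nn_integral_mult)
  moreover have "u (restrict (\<lambda>i. ?Q i \<omega>) {c}) = g (X c \<omega>) (Y c \<omega>)" for \<omega>
    by (simp add: u_def)
  moreover have "w (restrict (\<lambda>i. ?Q i \<omega>) B) = H (\<lambda>i. Y i \<omega>)" for \<omega>
    unfolding w_def by (rule H) (simp add: B_def)
  ultimately show ?thesis
    by simp
qed

lemma nn_integral_zero_coordinate_ge:
  fixes H :: "(nat \<Rightarrow> nat) \<Rightarrow> ennreal"
  assumes zero_mass: "a * (\<integral>\<^sup>+\<omega>. of_bool (Y 0 \<omega> = 0) \<partial>M)
                        \<le> (\<integral>\<^sup>+\<omega>. of_nat (X 0 \<omega>) * of_bool (Y 0 \<omega> = 0) \<partial>M)"
    and H: "\<And>y y'. (\<And>t. t < K \<Longrightarrow> t \<noteq> c \<Longrightarrow> y t = y' t) \<Longrightarrow> H y = H y'"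
  shows "a * (\<integral>\<^sup>+\<omega>. of_bool (Y c \<omega> = 0) * H (\<lambda>i. Y i \<omega>) \<partial>M)
           \<le> (\<integral>\<^sup>+\<omega>. of_nat (X c \<omega>) * of_bool (Y c \<omega> = 0) * H (\<lambda>i. Y i \<omega>) \<partial>M)"
proof -
  have "a * (\<integral>\<^sup>+\<omega>. of_bool (Y c \<omega> = 0) * H (\<lambda>i. Y i \<omega>) \<partial>M)
      = a * (\<integral>\<^sup>+\<omega>. of_bool (Y 0 \<omega> = 0) \<partial>M) * (\<integral>\<^sup>+\<omega>. H (\<lambda>i. Y i \<omega>) \<partial>M)"
    using nn_integral_mult_indep_coordinate[where K = K and c = c and H = H, OF H, where g = "\<lambda>_ y. of_bool (y = 0)"]
      nn_integral_pair_shift[of "\<lambda>_ y. of_bool (y = 0)" c]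
    by (simp add: mult.assoc)
  also have "\<dots> \<le> (\<integral>\<^sup>+\<omega>. of_nat (X 0 \<omega>) * of_bool (Y 0 \<omega> = 0) \<partial>M) * (\<integral>\<^sup>+\<omega>. H (\<lambda>i. Y i \<omega>) \<partial>M)"
    using zero_mass by (rule mult_right_mono) simp
  also have "\<dots> = (\<integral>\<^sup>+\<omega>. of_nat (X c \<omega>) * of_bool (Y c \<omega> = 0) * H (\<lambda>i. Y i \<omega>) \<partial>M)"
    using nn_integral_mult_indep_coordinate[where K = K and c = c and H = H, OF H, where g = "\<lambda>x y. of_nat x * of_bool (y = 0)"]
      nn_integral_pair_shift[of "\<lambda>x y. of_nat x * of_bool (y = 0)" c]
    by simp
  finally show ?thesis .
qed

lemma nn_integral_Npaths0_le_open_zero_mass: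
  fixes W :: "(nat \<Rightarrow> nat) \<Rightarrow> ennreal"
  assumes zero_mass: "a * (\<integral>\<^sup>+\<omega>. of_bool (Y 0 \<omega> = 0) \<partial>M)
                        \<le> (\<integral>\<^sup>+\<omega>. of_nat (X 0 \<omega>) * of_bool (Y 0 \<omega> = 0) \<partial>M)"
    and W: "\<And>y y'. (\<And>t. t < m ^ n \<Longrightarrow> y t = y' t) \<Longrightarrow> W y = W y'"
    and m: "0 < m"
  shows "a * (\<integral>\<^sup>+\<omega>. of_nat (Npaths0 m (\<lambda>i. Y i \<omega>) n 0) * W (\<lambda>i. Y i \<omega>) \<partial>M)
           \<le> (\<integral>\<^sup>+\<omega>. of_nat (open_zero_mass m (\<lambda>i. X i \<omega>) (\<lambda>i. Y i \<omega>) n 0) * W (\<lambda>i. Y i \<omega>) \<partial>M)"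
proof -
  let ?H = "zero_start_weight m n W"
  have H_cong: "?H c y = ?H c y'" if "c < m ^ n" "\<And>t. t < m ^ n \<Longrightarrow> t \<noteq> c \<Longrightarrow> y t = y' t" for c y y'
    using m W that by (rule zero_start_weight_cong)
  have integrand_measurable: "(\<lambda>\<omega>. f (X c \<omega>) * of_bool (Y c \<omega> = 0) * ?H c (\<lambda>i. Y i \<omega>)) \<in> borel_measurable M"
    if "c < m ^ n" for c and f :: "nat \<Rightarrow> ennreal"
  proof (rule measurable_window[where K = "m ^ n"])
    fix x y x' y' :: "nat \<Rightarrow> nat"
    assume "\<And>t. t < m ^ n \<Longrightarrow> x t = x' t" "\<And>t. t < m ^ n \<Longrightarrow> y t = y' t"
    then show "f (x c) * of_bool (y c = 0) * ?H c y = f (x' c) * of_bool (y' c = 0) * ?H c y'"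
      using that H_cong[OF that, of y y'] by simp
  qed simp
  have "a * (\<integral>\<^sup>+\<omega>. of_nat (Npaths0 m (\<lambda>i. Y i \<omega>) n 0) * W (\<lambda>i. Y i \<omega>) \<partial>M)
      = a * (\<integral>\<^sup>+\<omega>. (\<Sum>c<m ^ n. 1 * of_bool (Y c \<omega> = 0) * ?H c (\<lambda>i. Y i \<omega>)) \<partial>M)"
    by (simp only: Npaths0_mult_eq_sum mult_1)
  also have "\<dots> = (\<Sum>c<m ^ n. a * (\<integral>\<^sup>+\<omega>. of_bool (Y c \<omega> = 0) * ?H c (\<lambda>i. Y i \<omega>) \<partial>M))"
    by (subst nn_integral_sum) (use integrand_measurable[of _ "\<lambda>_. 1"] in \<open>simp_all add: sum_distrib_left\<close>)
  also have "\<dots> \<le> (\<Sum>c<m ^ n. \<integral>\<^sup>+\<omega>. of_nat (X c \<omega>) * of_bool (Y c \<omega> = 0) * ?H c (\<lambda>i. Y i \<omega>) \<partial>M)"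
  proof (rule sum_mono)
    fix c assume "c \<in> {..<m ^ n}"
    then have c: "c < m ^ n" by simp
    show "a * (\<integral>\<^sup>+\<omega>. of_bool (Y c \<omega> = 0) * ?H c (\<lambda>i. Y i \<omega>) \<partial>M)
        \<le> (\<integral>\<^sup>+\<omega>. of_nat (X c \<omega>) * of_bool (Y c \<omega> = 0) * ?H c (\<lambda>i. Y i \<omega>) \<partial>M)"
      by (rule nn_integral_zero_coordinate_ge[where K = "m ^ n", OF zero_mass H_cong[OF c]])
  qed
  also have "\<dots> = (\<integral>\<^sup>+\<omega>. of_nat (open_zero_mass m (\<lambda>i. X i \<omega>) (\<lambda>i. Y i \<omega>) n 0) * W (\<lambda>i. Y i \<omega>) \<partial>M)"
    unfolding open_zero_mass_mult_eq_sum
    by (subst nn_integral_sum) (use integrand_measurable[of _ of_nat] in simp_all)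
  finally show ?thesis .
qed

lemma measurable_open_zero_mass_Npaths0:
  fixes P :: "(nat \<Rightarrow> nat) \<Rightarrow> bool" and g :: "nat \<Rightarrow> nat \<Rightarrow> bool \<Rightarrow> 'b :: topological_space"
  assumes "0 < m" and P: "\<And>y y'. (\<And>t. t < m ^ n \<Longrightarrow> y t = y' t) \<Longrightarrow> P y = P y'"
  shows "(\<lambda>\<omega>. g (open_zero_mass m (\<lambda>i. X i \<omega>) (\<lambda>i. Y i \<omega>) n 0) (Npaths0 m (\<lambda>i. Y i \<omega>) n 0)
            (P (\<lambda>i. Y i \<omega>))) \<in> borel_measurable M"
proof (rule measurable_window[where K = "m ^ n"])
  fix x y x' y' :: "nat \<Rightarrow> nat"
  assume x: "\<And>t. t < m ^ n \<Longrightarrow> x t = x' t" and y: "\<And>t. t < m ^ n \<Longrightarrow> y t = y' t"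
  have "open_zero_mass m x y n 0 = open_zero_mass m x' y' n 0"
    using \<open>0 < m\<close> x y by (rule open_zero_mass_cong0)
  moreover have "Npaths0 m y n 0 = Npaths0 m y' n 0"
    using \<open>0 < m\<close> y by (rule Npaths0_cong0)
  moreover have "P y = P y'"
    using y by (rule P)
  ultimately show "g (open_zero_mass m x y n 0) (Npaths0 m y n 0) (P y)
      = g (open_zero_mass m x' y' n 0) (Npaths0 m y' n 0) (P y')"
    by simp
qed simp

lemma nn_integral_Npaths0_budget:
  fixes P :: "(nat \<Rightarrow> nat) \<Rightarrow> bool"
  assumes zero_mass: "ennreal \<eta> * (\<integral>\<^sup>+\<omega>. of_bool (Y 0 \<omega> = 0) \<partial>M)
                        \<le> (\<integral>\<^sup>+\<omega>. of_nat (X 0 \<omega>) * of_bool (Y 0 \<omega> = 0) \<partial>M)"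
    and P: "\<And>y y'. (\<And>t. t < m ^ n \<Longrightarrow> y t = y' t) \<Longrightarrow> P y = P y'"
    and budget: "\<And>y. P y \<Longrightarrow> real l \<le> \<eta> / 2 * real (Npaths0 m y n 0)"
    and "0 < m" "0 \<le> \<eta>"
  shows "ennreal (\<eta> / 2) * (\<integral>\<^sup>+\<omega>. of_nat (Npaths0 m (\<lambda>i. Y i \<omega>) n 0) * of_bool (P (\<lambda>i. Y i \<omega>)) \<partial>M)
           \<le> (\<integral>\<^sup>+\<omega>. of_nat (open_zero_mass m (\<lambda>i. X i \<omega>) (\<lambda>i. Y i \<omega>) n 0 - l) * of_bool (P (\<lambda>i. Y i \<omega>)) \<partial>M)"
    (is "ennreal (\<eta> / 2) * ?E \<le> ?I")
proof (rule ennreal_le_of_double_le)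
  let ?N = "\<lambda>\<omega>. Npaths0 m (\<lambda>i. Y i \<omega>) n 0"
  let ?S = "\<lambda>\<omega>. open_zero_mass m (\<lambda>i. X i \<omega>) (\<lambda>i. Y i \<omega>) n 0"
  let ?W = "\<lambda>\<omega>. of_bool (P (\<lambda>i. Y i \<omega>)) :: ennreal"
  have W_measurable: "(\<lambda>\<omega>. of_nat (f (?S \<omega>) (?N \<omega>)) * ?W \<omega> :: ennreal) \<in> borel_measurable M" for f
    using \<open>0 < m\<close> P by (rule measurable_open_zero_mass_Npaths0)
  have "?E \<le> (\<integral>\<^sup>+\<omega>. of_nat (m ^ n) \<partial>M)"
    by (intro nn_integral_mono) (simp add: Npaths0_le del: of_nat_power)
  also have "\<dots> = of_nat (m ^ n)"
    by (simp add: emeasure_space_1 del: of_nat_power)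
  finally show "ennreal (\<eta> / 2) * ?E \<noteq> \<infinity>"
    by (auto simp: ennreal_mult_eq_top_iff top_unique simp del: of_nat_power)
  have "2 * (ennreal (\<eta> / 2) * ?E) = ennreal \<eta> * ?E"
    using \<open>0 \<le> \<eta>\<close> ennreal_mult[of 2 "\<eta> / 2"] by (simp add: mult.assoc[symmetric])
  also have "\<dots> \<le> (\<integral>\<^sup>+\<omega>. of_nat (?S \<omega>) * ?W \<omega> \<partial>M)"
  proof (rule nn_integral_Npaths0_le_open_zero_mass[OF zero_mass _ \<open>0 < m\<close>])
    show "of_bool (P y) = (of_bool (P y') :: ennreal)" if "\<And>t. t < m ^ n \<Longrightarrow> y t = y' t" for y y'
      using P[OF that] by simp
  qed
  also have "\<dots> \<le> (\<integral>\<^sup>+\<omega>. of_nat (?S \<omega> - l) * ?W \<omega> + of_nat l * ?W \<omega> \<partial>M)"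
    by (intro nn_integral_mono) (auto simp flip: distrib_right of_nat_add)
  also have "\<dots> = ?I + (\<integral>\<^sup>+\<omega>. of_nat l * ?W \<omega> \<partial>M)"
    using W_measurable[of "\<lambda>s _. s - l"] W_measurable[of "\<lambda>_ _. l"] by (rule nn_integral_add)
  also have "(\<integral>\<^sup>+\<omega>. of_nat l * ?W \<omega> \<partial>M) \<le> (\<integral>\<^sup>+\<omega>. ennreal (\<eta> / 2) * (of_nat (?N \<omega>) * ?W \<omega>) \<partial>M)"
    using budget \<open>0 \<le> \<eta>\<close> by (intro nn_integral_mono ennreal_of_bool_budget) auto
  also have "\<dots> = ennreal (\<eta> / 2) * ?E"
    using W_measurable[of "\<lambda>_ k. k"] by (rule nn_integral_cmult)
  finally show "2 * (ennreal (\<eta> / 2) * ?E) \<le> ?I + ennreal (\<eta> / 2) * ?E"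
    by (simp add: add_left_mono)
qed

lemma nn_integral_tval_ge_open_zero_mass:
  fixes P :: "(nat \<Rightarrow> nat) \<Rightarrow> bool"
  assumes Y_le_X: "AE \<omega> in M. \<forall>i. Y i \<omega> \<le> X i \<omega>"
    and P: "\<And>y. P y \<Longrightarrow> tval m y n 0 = k"
    and "0 < m"
  shows "of_nat (m ^ (k + l)) *
           (\<integral>\<^sup>+\<omega>. of_nat (open_zero_mass m (\<lambda>i. X i \<omega>) (\<lambda>i. Y i \<omega>) n 0 - l) * of_bool (P (\<lambda>i. Y i \<omega>)) \<partial>M)
         \<le> (\<integral>\<^sup>+\<omega>. of_nat (tval m (\<lambda>i. X i \<omega>) (n + k + l) 0) \<partial>M)"
proof -
  have "(\<integral>\<^sup>+\<omega>. of_nat (open_zero_mass m (\<lambda>i. X i \<omega>) (\<lambda>i. Y i \<omega>) n 0 - l) * of_bool (P (\<lambda>i. Y i \<omega>)) \<partial>M)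
      \<le> (\<integral>\<^sup>+\<omega>. of_nat (tval m (\<lambda>i. X i \<omega>) n 0 - (k + l)) \<partial>M)"
    using Y_le_X
  proof (intro nn_integral_mono_AE, eventually_elim)
    case (elim \<omega>)
    have "tval m (\<lambda>i. Y i \<omega>) n 0 + open_zero_mass m (\<lambda>i. X i \<omega>) (\<lambda>i. Y i \<omega>) n 0 \<le> tval m (\<lambda>i. X i \<omega>) n 0"
      using elim \<open>0 < m\<close> by (intro tval_ge_tval_plus_open_zero_mass) auto
    then show ?case
      using P[of "\<lambda>i. Y i \<omega>"] by auto
  qed
  then have "of_nat (m ^ (k + l)) *
           (\<integral>\<^sup>+\<omega>. of_nat (open_zero_mass m (\<lambda>i. X i \<omega>) (\<lambda>i. Y i \<omega>) n 0 - l) * of_bool (P (\<lambda>i. Y i \<omega>)) \<partial>M)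
      \<le> of_nat (m ^ (k + l)) * (\<integral>\<^sup>+\<omega>. of_nat (tval m (\<lambda>i. X i \<omega>) n 0 - (k + l)) \<partial>M)"
    by (rule mult_left_mono) simp
  also have "\<dots> \<le> (\<integral>\<^sup>+\<omega>. of_nat (tval m (\<lambda>i. X i \<omega>) (n + k + l) 0) \<partial>M)"
    using nn_integral_tval_ge_ancestors[where j = "k + l" and n = n] by (simp add: add.assoc)
  finally show ?thesis .
qed

lemma nn_integral_tval_ge_Npaths0:
  fixes \<eta> r :: real
  assumes Y_le_X: "AE \<omega> in M. \<forall>i. Y i \<omega> \<le> X i \<omega>"
    and zero_mass: "ennreal \<eta> * (\<integral>\<^sup>+\<omega>. of_bool (Y 0 \<omega> = 0) \<partial>M)
                      \<le> (\<integral>\<^sup>+\<omega>. of_nat (X 0 \<omega>) * of_bool (Y 0 \<omega> = 0) \<partial>M)"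
    and "0 < m" "0 < \<eta>" "real l \<le> r * \<eta> / 2"
  shows "of_nat (m ^ (k + l)) * (ennreal (\<eta> / 2) * (\<integral>\<^sup>+\<omega>. of_nat (Npaths0 m (\<lambda>i. Y i \<omega>) n 0)
           * of_bool (r \<le> real (Npaths0 m (\<lambda>i. Y i \<omega>) n 0) \<and> tval m (\<lambda>i. Y i \<omega>) n 0 = k) \<partial>M))
         \<le> (\<integral>\<^sup>+\<omega>. of_nat (tval m (\<lambda>i. X i \<omega>) (n + k + l) 0) \<partial>M)"
proof -
  define P where "P y \<longleftrightarrow> r \<le> real (Npaths0 m y n 0) \<and> tval m y n 0 = k" for y
  have P_window: "P y = P y'" if "\<And>t. t < m ^ n \<Longrightarrow> y t = y' t" for y y'
    using Npaths0_cong0[OF \<open>0 < m\<close> that] tval_cong0[OF that] by (simp add: P_def)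
  have budget: "real l \<le> \<eta> / 2 * real (Npaths0 m y n 0)" if "P y" for y
  proof -
    have "r * \<eta> \<le> real (Npaths0 m y n 0) * \<eta>"
      using that \<open>0 < \<eta>\<close> by (intro mult_right_mono) (auto simp: P_def)
    then show ?thesis
      using \<open>real l \<le> r * \<eta> / 2\<close> by (simp add: mult.commute)
  qed
  have "of_nat (m ^ (k + l)) * (ennreal (\<eta> / 2) *
      (\<integral>\<^sup>+\<omega>. of_nat (Npaths0 m (\<lambda>i. Y i \<omega>) n 0) * of_bool (P (\<lambda>i. Y i \<omega>)) \<partial>M))
    \<le> of_nat (m ^ (k + l)) *
      (\<integral>\<^sup>+\<omega>. of_nat (open_zero_mass m (\<lambda>i. X i \<omega>) (\<lambda>i. Y i \<omega>) n 0 - l) * of_bool (P (\<lambda>i. Y i \<omega>)) \<partial>M)"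
    using \<open>0 < \<eta>\<close>
    by (intro mult_left_mono nn_integral_Npaths0_budget[OF zero_mass P_window budget \<open>0 < m\<close>]) simp_all
  also have "\<dots> \<le> (\<integral>\<^sup>+\<omega>. of_nat (tval m (\<lambda>i. X i \<omega>) (n + k + l) 0) \<partial>M)"
    using Y_le_X _ \<open>0 < m\<close> by (rule nn_integral_tval_ge_open_zero_mass) (simp add: P_def)
  finally show ?thesis
    by (simp add: P_def)
qed

end

lemma (in prob_space) nn_integral_excess_on_zero_set:
  fixes X Y :: "'a \<Rightarrow> nat"
  assumes X: "X \<in> M \<rightarrow>\<^sub>M count_space UNIV" and Y: "Y \<in> M \<rightarrow>\<^sub>M count_space UNIV"
    and integrable: "integrable M (\<lambda>\<omega>. real (X \<omega>))"
    and agree: "AE \<omega> in M. 0 < Y \<omega> \<longrightarrow> X \<omega> = Y \<omega>"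
    and excess: "\<eta> * prob {\<omega> \<in> space M. Y \<omega> = 0} \<le> expectation (\<lambda>\<omega>. real (X \<omega>) - real (Y \<omega>))"
    and "0 \<le> \<eta>"
  shows "ennreal \<eta> * (\<integral>\<^sup>+\<omega>. of_bool (Y \<omega> = 0) \<partial>M) \<le> (\<integral>\<^sup>+\<omega>. of_nat (X \<omega>) * of_bool (Y \<omega> = 0) \<partial>M)"
proof -
  define f where "f \<omega> = real (X \<omega>) * of_bool (Y \<omega> = 0)" for \<omega>
  have real_X: "(\<lambda>\<omega>. real (X \<omega>)) \<in> borel_measurable M"
    by (rule measurable_compose[OF X]) simp
  have real_Y: "(\<lambda>\<omega>. real (Y \<omega>)) \<in> borel_measurable M"
    by (rule measurable_compose[OF Y]) simp
  have "(\<lambda>\<omega>. of_bool (Y \<omega> = 0) :: real) \<in> borel_measurable M"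
    by (rule measurable_compose[OF Y]) simp
  with real_X have f_measurable: "f \<in> borel_measurable M"
    unfolding f_def by (rule borel_measurable_times)
  have "expectation (\<lambda>\<omega>. real (X \<omega>) - real (Y \<omega>)) = integral\<^sup>L M f"
  proof (rule integral_cong_AE)
    show "(\<lambda>\<omega>. real (X \<omega>) - real (Y \<omega>)) \<in> borel_measurable M"
      using real_X real_Y by (rule borel_measurable_diff)
    show "AE \<omega> in M. real (X \<omega>) - real (Y \<omega>) = f \<omega>"
      using agree by eventually_elim (auto simp: f_def)
  qed (fact f_measurable)
  moreover have "(\<integral>\<^sup>+\<omega>. of_nat (X \<omega>) * of_bool (Y \<omega> = 0) \<partial>M) = ennreal (integral\<^sup>L M f)"
  proof -
    have "integrable M f"
      using integrable f_measurable by (rule Bochner_Integration.integrable_bound) (simp add: f_def)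
    then have "(\<integral>\<^sup>+\<omega>. ennreal (f \<omega>) \<partial>M) = ennreal (integral\<^sup>L M f)"
      by (rule nn_integral_eq_integral) (simp add: f_def)
    moreover have "ennreal (f \<omega>) = of_nat (X \<omega>) * of_bool (Y \<omega> = 0)" for \<omega>
      by (cases "Y \<omega> = 0") (simp_all add: f_def ennreal_of_nat_eq_real_of_nat)
    ultimately show ?thesis
      by simp
  qed
  moreover have "(\<integral>\<^sup>+\<omega>. of_bool (Y \<omega> = 0) \<partial>M) = ennreal (prob {\<omega> \<in> space M. Y \<omega> = 0})"
  proof -
    have "{\<omega> \<in> space M. Y \<omega> = 0} \<in> sets M"
      using measurable_sets[OF Y, of "{0}"] by (simp add: vimage_def Int_def conj_commute)
    then have "(\<integral>\<^sup>+\<omega>. indicator {\<omega> \<in> space M. Y \<omega> = 0} \<omega> \<partial>M) = ennreal (prob {\<omega> \<in> space M. Y \<omega> = 0})"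
      by (simp add: emeasure_eq_measure)
    moreover have "(\<integral>\<^sup>+\<omega>. of_bool (Y \<omega> = 0) \<partial>M) = (\<integral>\<^sup>+\<omega>. indicator {\<omega> \<in> space M. Y \<omega> = 0} \<omega> \<partial>M)"
      by (intro nn_integral_cong) (simp add: indicator_def)
    ultimately show ?thesis
      by simp
  qed
  ultimately show ?thesis
    using excess \<open>0 \<le> \<eta>\<close> by (simp add: ennreal_mult[symmetric] ennreal_leI)
qed

theorem theorem4p2:
  fixes M :: "'a measure" and m :: nat and X0 Y0 :: "nat \<Rightarrow> 'a \<Rightarrow> nat"
    and \<eta> r :: real and n k l :: nat
  assumes m: "m \<ge> 2"
    and prob: "prob_space M"
    and meas: "\<And>i. (\<lambda>\<omega>. (X0 i \<omega>, Y0 i \<omega>)) \<in> M \<rightarrow>\<^sub>M count_space UNIV"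
    and indep: "prob_space.indep_vars M (\<lambda>_. count_space UNIV) (\<lambda>i \<omega>. (X0 i \<omega>, Y0 i \<omega>)) UNIV"
    and ident: "\<And>i. distr M (count_space UNIV) (\<lambda>\<omega>. (X0 i \<omega>, Y0 i \<omega>))
                     = distr M (count_space UNIV) (\<lambda>\<omega>. (X0 0 \<omega>, Y0 0 \<omega>))"
    and marg: "\<And>j::nat. j \<ge> 1 \<Longrightarrow>
                 measure M {\<omega>\<in>space M. X0 0 \<omega> = j} \<ge> measure M {\<omega>\<in>space M. Y0 0 \<omega> = j}"
    and Y0pos: "measure M {\<omega>\<in>space M. Y0 0 \<omega> = 0} > 0"
    and coup_ge: "AE \<omega> in M. X0 0 \<omega> \<ge> Y0 0 \<omega>"
    and coup_eq: "AE \<omega> in M. Y0 0 \<omega> > 0 \<longrightarrow> X0 0 \<omega> = Y0 0 \<omega>"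
    and eta: "\<eta> > 0"
    and finE: "integrable M (\<lambda>\<omega>. real (X0 0 \<omega>))"
    and Ediff: "prob_space.expectation M (\<lambda>\<omega>. real (X0 0 \<omega>) - real (Y0 0 \<omega>))
                  \<ge> \<eta> * measure M {\<omega>\<in>space M. Y0 0 \<omega> = 0}"
    and r: "r \<ge> 0"
    and l: "real l \<le> r * \<eta> / 2"
  shows "(\<integral>\<^sup>+ \<omega>. ennreal (real (tval m (\<lambda>i. X0 i \<omega>) (n + k + l) 0)) \<partial>M)
         \<ge> ennreal (real m ^ (k + l) * \<eta> / 2) *
           (\<integral>\<^sup>+ \<omega>. ennreal (real (Npaths0 m (\<lambda>i. Y0 i \<omega>) n 0)
                      * indicator {\<omega>. real (Npaths0 m (\<lambda>i. Y0 i \<omega>) n 0) \<ge> r} \<omega>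
                      * indicator {\<omega>. tval m (\<lambda>i. Y0 i \<omega>) n 0 = k} \<omega>) \<partial>M)"
proof -
  interpret iid_pairs M X0 Y0
    using prob meas indep ident by (intro iid_pairs.intro iid_pairs_axioms.intro)
  have "0 < m"
    using m by simp
  have zero_mass: "ennreal \<eta> * (\<integral>\<^sup>+\<omega>. of_bool (Y0 0 \<omega> = 0) \<partial>M)
      \<le> (\<integral>\<^sup>+\<omega>. of_nat (X0 0 \<omega>) * of_bool (Y0 0 \<omega> = 0) \<partial>M)"
    using eta by (intro nn_integral_excess_on_zero_set[OF measurable_X measurable_Y finE coup_eq Ediff]) simp
  have "ennreal (real m ^ (k + l) * \<eta> / 2) = of_nat (m ^ (k + l)) * ennreal (\<eta> / 2)"
    by (subst ennreal_of_nat_eq_real_of_nat) (use eta in \<open>simp add: ennreal_mult[symmetric]\<close>)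
  moreover have "(\<integral>\<^sup>+ \<omega>. ennreal (real (Npaths0 m (\<lambda>i. Y0 i \<omega>) n 0)
                      * indicator {\<omega>. real (Npaths0 m (\<lambda>i. Y0 i \<omega>) n 0) \<ge> r} \<omega>
                      * indicator {\<omega>. tval m (\<lambda>i. Y0 i \<omega>) n 0 = k} \<omega>) \<partial>M)
      = (\<integral>\<^sup>+\<omega>. of_nat (Npaths0 m (\<lambda>i. Y0 i \<omega>) n 0)
           * of_bool (r \<le> real (Npaths0 m (\<lambda>i. Y0 i \<omega>) n 0) \<and> tval m (\<lambda>i. Y0 i \<omega>) n 0 = k) \<partial>M)"
    by (intro nn_integral_cong) (simp add: indicator_def ennreal_of_nat_eq_real_of_nat)
  moreover note nn_integral_tval_ge_Npaths0[OF AE_pairs_all[OF coup_ge] zero_mass \<open>0 < m\<close> eta l]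
  ultimately show ?thesis
    by (simp add: mult.assoc ennreal_of_nat_eq_real_of_nat)
qed

end
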